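(* Let $Q$ be a quadrilateral in $K^2$. The $Q$-pairs of bisectors of $Q$ are precisely the degenerations of the conics in the pencil of $Q$.
   Context: $K$ is a field of characteristic $\neq 2$; we work in $K^2$. Every line $L$ has an equation $tX-uY+v=0$ normalized so that $t=1$ if $u=0$ and $u=1$ if $u\neq 0$; coefficients denoted $t_L,u_L,v_L$. A quadrilateral $Q=ABA'B'$ consists of four distinct lines $A,B,A',B'$ (sides), not all through one point, with adjacent sides ($A,B$; $B,A'$; $A',B'$; $B',A$) not parallel; opposite sides ($A,A'$; $B,B'$) may be parallel. Vertices: $A\cap B$, $B\cap A'$, $A'\cap B'$, $B'\cap A$ (two may coincide if three sides are concurrent). The centroid of $Q$ is the average of the four vertices (equivalently the midpoint of the midpoints of the diagonals). Let $\alpha=t_Au_Bu_{A'}u_{B'}-u_At_Bu_{A'}u_{B'}+u_Au_Bt_{A'}u_{B'}-u_Au_Bu_{A'}t_{B'}$, $\beta=t_Au_Bt_{A'}u_{B'}-u_At_Bu_{A'}t_{B'}$, $\gamma=t_At_Bt_{A'}u_{B'}-t_At_Bu_{A'}t_{B'}+t_Au_Bt_{A'}t_{B'}-u_At_Bt_{A'}t_{B'}$, and $\langle \mathbf v,\mathbf w\rangle_Q=\mathbf v^T\begin{pmatrix}\gamma&-\beta\\-\beta&\alpha\end{pmatrix}\mathbf w$ on $K^2$. Lines $\ell_1,\ell_2$ are $Q$-orthogonal if $\langle (u_{\ell_1},t_{\ell_1}),(u_{\ell_2},t_{\ell_2})\rangle_Q=0$. A line $\ell$ crosses a pair $\{\ell_1,\ell_2\}$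 if distinct from both and not parallel to both; $\mathrm{mid}_{\{\ell_1,\ell_2\}}(\ell)$ is the midpoint of the points where $\ell$ meets $\ell_1,\ell_2$ (the point at infinity of $\ell$ if one is at infinity). $\ell$ bisects $Q$ (is a bisector of $Q$) if $\mathrm{mid}_{\mathsf P}(\ell)$ is the same for all pairs $\mathsf P$ among $\{A,A'\},\{B,B'\}$ that $\ell$ crosses; this common point is the midpoint of the bisector. A pair $\{\ell_1,\ell_2\}$ of bisectors (possibly $\ell_1=\ell_2$) is $Q$-antipodal if the midpoint of their midpoints is the centroid of $Q$, and is a $Q$-pair if it is $Q$-antipodal and $Q$-orthogonal. A conic is a quadratic polynomial in $K[X,Y]$. Let $f_1$ be a product of linear polynomials defining $A$ and $A'$, and $f_2$ a product of linear polynomials defining $B$ and $B'$. The pencil of $Q$ is $\{af_1+bf_2: a,b\in K \text{ not both } 0\}$. A pair of lines $\{\ell_1,\ell_2\}$ (possibly $\ell_1=\ell_2$) is a degeneration of a conic $f$ if there is $\lambda\in K$ such that the zero set of $f+\lambda$ is $\ell_1\cup\ell_2$. *)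

theory Defs
  imports Main
begin

text \<open>Points of K^2 are pairs. A line with normalized equation t X - u Y + v = 0
  is represented by the triple (t,u,v).\<close>

type_synonym 'a pt = "'a \<times> 'a"
type_synonym 'a ln = "'a \<times> 'a \<times> 'a"

definition tL :: "'a ln \<Rightarrow> 'a" where "tL L = fst L"
definition uL :: "'a ln \<Rightarrow> 'a" where "uL L = fst (snd L)"
definition vL :: "'a ln \<Rightarrow> 'a" where "vL L = snd (snd L)"

definition is_line :: "'a::field ln \<Rightarrow> bool" where
  "is_line L \<longleftrightarrow> (uL L = 0 \<and> tL L = 1) \<or> uL L = 1"

definition lin :: "'a::field ln \<Rightarrow> 'a pt \<Rightarrow> 'a" where
  "lin L p = tL L * fst p - uL L * snd p + vL L"

definition on_line :: "'a::field pt \<Rightarrow> 'a ln \<Rightarrow> bool" where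
  "on_line p L \<longleftrightarrow> lin L p = 0"

definition line_set :: "'a::field ln \<Rightarrow> 'a pt set" where
  "line_set L = {p. on_line p L}"

text \<open>Parallel (includes equal lines).\<close>
definition parallel :: "'a::field ln \<Rightarrow> 'a ln \<Rightarrow> bool" where
  "parallel L M \<longleftrightarrow> tL L * uL M - uL L * tL M = 0"

text \<open>Intersection point of two non-parallel lines.\<close>
definition meet :: "'a::field ln \<Rightarrow> 'a ln \<Rightarrow> 'a pt" where
  "meet L M = (THE p. on_line p L \<and> on_line p M)"

definition midpt :: "'a::field pt \<Rightarrow> 'a pt \<Rightarrow> 'a pt" where
  "midpt p q = ((fst p + fst q) / 2, (snd p + snd q) / 2)"

text \<open>Affine points together with points at infinity; the point at infinity
  of a (normalized) line L is represented by Infty (t_L, u_L).\<close>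
datatype 'a ppt = Fin "'a \<times> 'a" | Infty "'a \<times> 'a"

definition infpt :: "'a::field ln \<Rightarrow> 'a ppt" where
  "infpt L = Infty (tL L, uL L)"

definition is_quad :: "'a::field ln \<Rightarrow> 'a ln \<Rightarrow> 'a ln \<Rightarrow> 'a ln \<Rightarrow> bool" where
  "is_quad A B A' B' \<longleftrightarrow>
     is_line A \<and> is_line B \<and> is_line A' \<and> is_line B' \<and>
     A \<noteq> B \<and> A \<noteq> A' \<and> A \<noteq> B' \<and> B \<noteq> A' \<and> B \<noteq> B' \<and> A' \<noteq> B' \<and>
     \<not> (\<exists>p. on_line p A \<and> on_line p B \<and> on_line p A' \<and> on_line p B') \<and>
     \<not> parallel A B \<and> \<not> parallel B A' \<and> \<not> parallel A' B' \<and> \<not> parallel B' A"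

definition centroid :: "'a::field ln \<Rightarrow> 'a ln \<Rightarrow> 'a ln \<Rightarrow> 'a ln \<Rightarrow> 'a pt" where
  "centroid A B A' B' =
     (let P1 = meet A B; P2 = meet B A'; P3 = meet A' B'; P4 = meet B' A in
      ((fst P1 + fst P2 + fst P3 + fst P4) / 4, (snd P1 + snd P2 + snd P3 + snd P4) / 4))"

definition crosses :: "'a::field ln \<Rightarrow> 'a ln \<Rightarrow> 'a ln \<Rightarrow> bool" where
  "crosses l l1 l2 \<longleftrightarrow> l \<noteq> l1 \<and> l \<noteq> l2 \<and> \<not> (parallel l l1 \<and> parallel l l2)"

text \<open>mid of l with respect to the pair {l1,l2} (meaningful when l crosses the pair).\<close>
definition mid :: "'a::field ln \<Rightarrow> 'a ln \<Rightarrow> 'a ln \<Rightarrow> 'a ppt" where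
  "mid l1 l2 l =
     (if parallel l l1 \<or> parallel l l2 then infpt l
      else Fin (midpt (meet l l1) (meet l l2)))"

definition bisects :: "'a::field ln \<Rightarrow> 'a ln \<Rightarrow> 'a ln \<Rightarrow> 'a ln \<Rightarrow> 'a ln \<Rightarrow> bool" where
  "bisects A B A' B' l \<longleftrightarrow> is_line l \<and>
     (crosses l A A' \<and> crosses l B B' \<longrightarrow> mid A A' l = mid B B' l)"

text \<open>Midpoint of a bisector (every line crosses at least one of the pairs).\<close>
definition bis_mid :: "'a::field ln \<Rightarrow> 'a ln \<Rightarrow> 'a ln \<Rightarrow> 'a ln \<Rightarrow> 'a ln \<Rightarrow> 'a ppt" where
  "bis_mid A B A' B' l = (if crosses l A A' then mid A A' l else mid B B' l)"

definition antipodal :: "'a::field ln \<Rightarrow> 'a ln \<Rightarrow> 'a ln \<Rightarrow> 'a ln \<Rightarrow> 'a ln \<Rightarrow> 'a ln \<Rightarrow> bool" where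
  "antipodal A B A' B' l1 l2 \<longleftrightarrow>
     (\<exists>p1 p2. bis_mid A B A' B' l1 = Fin p1 \<and> bis_mid A B A' B' l2 = Fin p2 \<and>
              midpt p1 p2 = centroid A B A' B')"

definition qalpha :: "'a::field ln \<Rightarrow> 'a ln \<Rightarrow> 'a ln \<Rightarrow> 'a ln \<Rightarrow> 'a" where
  "qalpha A B A' B' =
     tL A * uL B * uL A' * uL B' - uL A * tL B * uL A' * uL B'
   + uL A * uL B * tL A' * uL B' - uL A * uL B * uL A' * tL B'"

definition qbeta :: "'a::field ln \<Rightarrow> 'a ln \<Rightarrow> 'a ln \<Rightarrow> 'a ln \<Rightarrow> 'a" where
  "qbeta A B A' B' = tL A * uL B * tL A' * uL B' - uL A * tL B * uL A' * tL B'"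

definition qgamma :: "'a::field ln \<Rightarrow> 'a ln \<Rightarrow> 'a ln \<Rightarrow> 'a ln \<Rightarrow> 'a" where
  "qgamma A B A' B' =
     tL A * tL B * tL A' * uL B' - tL A * tL B * uL A' * tL B'
   + tL A * uL B * tL A' * tL B' - uL A * tL B * tL A' * tL B'"

definition qform :: "'a::field ln \<Rightarrow> 'a ln \<Rightarrow> 'a ln \<Rightarrow> 'a ln \<Rightarrow> 'a pt \<Rightarrow> 'a pt \<Rightarrow> 'a" where
  "qform A B A' B' v w =
     qgamma A B A' B' * fst v * fst w - qbeta A B A' B' * fst v * snd w
   - qbeta A B A' B' * snd v * fst w + qalpha A B A' B' * snd v * snd w"

definition q_orth :: "'a::field ln \<Rightarrow> 'a ln \<Rightarrow> 'a ln \<Rightarrow> 'a ln \<Rightarrow> 'a ln \<Rightarrow> 'a ln \<Rightarrow> bool" where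
  "q_orth A B A' B' l1 l2 \<longleftrightarrow> qform A B A' B' (uL l1, tL l1) (uL l2, tL l2) = 0"

definition q_pair :: "'a::field ln \<Rightarrow> 'a ln \<Rightarrow> 'a ln \<Rightarrow> 'a ln \<Rightarrow> 'a ln \<Rightarrow> 'a ln \<Rightarrow> bool" where
  "q_pair A B A' B' l1 l2 \<longleftrightarrow>
     bisects A B A' B' l1 \<and> bisects A B A' B' l2 \<and>
     antipodal A B A' B' l1 l2 \<and> q_orth A B A' B' l1 l2"

text \<open>Conics of the pencil, represented by their evaluation on K^2
  (only zero sets of f + lambda are used).\<close>
definition pencil :: "'a::field ln \<Rightarrow> 'a ln \<Rightarrow> 'a ln \<Rightarrow> 'a ln \<Rightarrow> ('a pt \<Rightarrow> 'a) set" where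
  "pencil A B A' B' =
     {(\<lambda>p. a * (lin A p * lin A' p) + b * (lin B p * lin B' p)) | a b. a \<noteq> 0 \<or> b \<noteq> 0}"

definition degeneration :: "'a::field ln \<Rightarrow> 'a ln \<Rightarrow> ('a pt \<Rightarrow> 'a) \<Rightarrow> bool" where
  "degeneration l1 l2 f \<longleftrightarrow> (\<exists>c. {p. f p + c = 0} = line_set l1 \<union> line_set l2)"

end

theory Submission
  imports Defs
begin

text \<open>
  Write f1 and f2 for the line pairs A A' and B B' and restrict conics to a line P + s e, where
  they become quadratics in s. The midpoint of the two points where such a line meets a line pair
  sits at the parameter -(linear coefficient) / (2 (quadratic coefficient)); so a line bisects Q
  exactly when the restrictions of f1 and f2 to it have proportional non-constant parts.

  If a f1 + b f2 + c = k l1 l2 with k nonzero, restricting to l1 and to l2 shows that both are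
  bisectors; restricting to the sides A, A' (or B, B') shows that the midpoints of l1 and l2
  average to the centroid; and comparing quadratic parts gives Q-orthogonality, because
  (alpha, beta, gamma) is the cross product of the quadratic parts of f1 and f2.

  Conversely, Q-orthogonality puts the quadratic part of l1 l2 into the span of those of f1 and
  f2, leaving an affine remainder. Since l1 is a bisector, the remainder is constant along l1,
  so a member of the pencil plus a constant factors as l1 times a translate of l2, and
  antipodality forces that translate to be l2.

  Finally, if a f1 + b f2 + c vanishes exactly on l1 and l2, restrict it along a direction e
  transversal to both lines: the roots are prescribed, so it is a multiple of l1 l2 as soon as
  its coefficient of s^2 is nonzero. If that coefficient were zero, e would lie in the radical of
  the quadratic part of a f1 + b f2, which also vanishes in the direction of l1; then a f1 + b f2
  would have no quadratic part, impossible for a quadrilateral.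
\<close>

section \<open>Algebra in a field\<close>

lemma quadratic_eq_0_imp_coeffs_eq_0:
  fixes \<alpha> \<beta> \<gamma> :: "'a::field"
  assumes "(2::'a) \<noteq> 0" and "\<And>s. \<alpha> * s\<^sup>2 + \<beta> * s + \<gamma> = 0"
  shows "\<alpha> = 0" "\<beta> = 0" "\<gamma> = 0"
proof -
  show \<gamma>: "\<gamma> = 0" using assms(2)[of 0] by simp
  have "\<alpha> + \<beta> = 0" "\<alpha> - \<beta> = 0"
    using assms(2)[of 1] assms(2)[of "-1"] \<gamma> by simp_all
  moreover have "2 * \<alpha> = (\<alpha> + \<beta>) + (\<alpha> - \<beta>)" by simp
  ultimately show "\<alpha> = 0" "\<beta> = 0" using assms(1) by simp_all
qed

lemma binary_form_eq_0_imp_coeffs_eq_0: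
  fixes P R S :: "'a::field"
  assumes "\<And>e. P * (fst e)\<^sup>2 + R * fst e * snd e + S * (snd e)\<^sup>2 = 0"
  shows "P = 0" "R = 0" "S = 0"
  using assms[of "(1, 0)"] assms[of "(0, 1)"] assms[of "(1, 1)"] by simp_all

lemma linear_eq_0_iff:
  fixes x d s :: "'a::field"
  assumes "d \<noteq> 0"
  shows "x + s * d = 0 \<longleftrightarrow> s = - x / d"
proof -
  have "x + s * d = 0 \<longleftrightarrow> s * d = - x" by (simp add: eq_neg_iff_add_eq_0 add.commute)
  also have "\<dots> \<longleftrightarrow> s = - x / d" using assms by (simp only: eq_divide_eq) simp
  finally show ?thesis .
qed

lemma linear_coeff_nonzero_if_root_set:
  fixes p q s1 s2 :: "'a::field"
  assumes two: "(2::'a) \<noteq> 0" and roots: "\<And>s. p * s + q = 0 \<longleftrightarrow> s = s1 \<or> s = s2"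
  shows "p \<noteq> 0"
proof
  assume "p = 0"
  with roots[of s1] have all: "s = s1 \<or> s = s2" for s using roots[of s] by simp
  have "s1 + 1 = s2" "s1 - 1 = s2" using all[of "s1 + 1"] all[of "s1 - 1"] by simp_all
  moreover have "(2::'a) = (s1 + 1) - (s1 - 1)" by simp
  ultimately show False using two by simp
qed

lemma quadratic_const_coeff_eq:
  fixes k p q s1 s2 :: "'a::field"
  assumes k: "k \<noteq> 0" and roots: "\<And>s. k * s\<^sup>2 + p * s + q = 0 \<longleftrightarrow> s = s1 \<or> s = s2"
  shows "q = k * s1 * s2"
proof -
  define s' where "s' = - p / k - s1"
  have factor: "k * s\<^sup>2 + p * s + q = (s - s1) * (k * (s - s'))" for s
    using roots[of s1] k by (simp add: s'_def power2_eq_square field_simps) algebra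
  have "q = k * s1 * s'" using factor[of 0] by simp
  moreover have "s' = s2"
  proof (cases "s' = s1")
    case True
    then have "s2 = s1" using roots[of s2] factor[of s2] k by auto
    with True show ?thesis by simp
  next
    case False
    then show ?thesis using roots[of s'] factor[of s'] by simp
  qed
  ultimately show ?thesis by simp
qed

lemma affine_nonvanishing_imp_const:
  fixes \<alpha> \<beta> \<gamma> :: "'a::field"
  assumes "\<And>x y. \<alpha> * x + \<beta> * y + \<gamma> \<noteq> 0"
  shows "\<alpha> = 0" "\<beta> = 0"
  using assms[of "- \<gamma> / \<alpha>" 0] assms[of 0 "- \<gamma> / \<beta>"] by (auto split: if_splits)

lemma binary_form_eq_0_if_radical:
  fixes P R S e1 e2 u t :: "'a::field"
  assumes "(2::'a) \<noteq> 0" "2 * P * e1 + R * e2 = 0" "R * e1 + 2 * S * e2 = 0"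
    and "P * u\<^sup>2 + R * u * t + S * t\<^sup>2 = 0" and "t * e1 - u * e2 \<noteq> 0"
  shows "P = 0" "R = 0" "S = 0"
proof -
  have "2 * (t * e1 - u * e2)\<^sup>2 * P = 0" "2 * (t * e1 - u * e2)\<^sup>2 * R = 0"
    and "2 * (t * e1 - u * e2)\<^sup>2 * S = 0"
    using assms(2-4) by algebra+
  then show "P = 0" "R = 0" "S = 0" using assms(1,5) by simp_all
qed

lemma det_eq_0_if_kernel:
  fixes a b X1 X2 Y1 Y2 :: "'a::field"
  assumes "a \<noteq> 0 \<or> b \<noteq> 0" "a * X1 + b * X2 = 0" "a * Y1 + b * Y2 = 0"
  shows "Y1 * X2 = Y2 * X1"
proof -
  have "a * (Y1 * X2 - Y2 * X1) = 0" "b * (Y1 * X2 - Y2 * X1) = 0"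
    using assms(2,3) by algebra+
  then show ?thesis using assms(1) by auto
qed

lemma kernel_if_det_eq_0:
  fixes a b X1 X2 Y1 Y2 :: "'a::field"
  assumes "Y1 * X2 = Y2 * X1" "a * X1 + b * X2 = 0" "X1 \<noteq> 0 \<or> X2 \<noteq> 0"
  shows "a * Y1 + b * Y2 = 0"
proof -
  have "X1 * (a * Y1 + b * Y2) = 0" "X2 * (a * Y1 + b * Y2) = 0"
    using assms(1,2) by algebra+
  then show ?thesis using assms(3) by auto
qed

lemma dependent_if_cross_eq_0:
  fixes p1 r1 s1 p2 r2 s2 :: "'a::field"
  assumes "r1 * s2 = s1 * r2" "s1 * p2 = p1 * s2" "p1 * r2 = r1 * p2"
  obtains a b where "a \<noteq> 0 \<or> b \<noteq> 0"
    "a * p1 + b * p2 = 0" "a * r1 + b * r2 = 0" "a * s1 + b * s2 = 0"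
proof -
  consider "p1 = 0 \<and> r1 = 0 \<and> s1 = 0" | "p1 \<noteq> 0" | "r1 \<noteq> 0" | "s1 \<noteq> 0" by blast
  then show ?thesis
  proof cases
    case 1 then show ?thesis using that[of 1 0] by simp
  next
    case 2 then show ?thesis using that[of p2 "- p1"] assms by (simp add: algebra_simps)
  next
    case 3 then show ?thesis using that[of r2 "- r1"] assms by (simp add: algebra_simps)
  next
    case 4 then show ?thesis using that[of s2 "- s1"] assms by (simp add: algebra_simps)
  qed
qed

lemma combination_div_eq:
  fixes m N1 N2 x y c :: "'a::field"
  assumes "m \<noteq> 0" "N1 * x + N2 * y = c * m"
  shows "N1 / m * x + N2 / m * y = c"
  using assms by (simp add: field_simps)

lemma in_span_if_det_eq_0:
  fixes p1 r1 s1 p2 r2 s2 p r s :: "'a::field"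
  assumes det: "p * (r1 * s2 - s1 * r2) + r * (s1 * p2 - p1 * s2) + s * (p1 * r2 - r1 * p2) = 0"
    and indep: "\<And>a b. a * p1 + b * p2 = 0 \<Longrightarrow> a * r1 + b * r2 = 0 \<Longrightarrow> a * s1 + b * s2 = 0
                  \<Longrightarrow> a = 0 \<and> b = 0"
  obtains a b where "a * p1 + b * p2 = p" "a * r1 + b * r2 = r" "a * s1 + b * s2 = s"
proof -
  consider "p1 * r2 - r1 * p2 \<noteq> 0" | "r1 * s2 - s1 * r2 \<noteq> 0" | "s1 * p2 - p1 * s2 \<noteq> 0"
    | "r1 * s2 = s1 * r2" "s1 * p2 = p1 * s2" "p1 * r2 = r1 * p2" by force
  then show ?thesis
  proof cases
    case 1
    let ?m = "p1 * r2 - r1 * p2"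
    show ?thesis
      by (rule that[of "(p * r2 - r * p2) / ?m" "(p1 * r - r1 * p) / ?m"]; rule combination_div_eq[OF 1])
        (use det in algebra)+
  next
    case 2
    let ?m = "r1 * s2 - s1 * r2"
    show ?thesis
      by (rule that[of "(r * s2 - s * r2) / ?m" "(r1 * s - s1 * r) / ?m"]; rule combination_div_eq[OF 2])
        (use det in algebra)+
  next
    case 3
    let ?m = "s1 * p2 - p1 * s2"
    show ?thesis
      by (rule that[of "(s * p2 - p * s2) / ?m" "(s1 * p - p1 * s) / ?m"]; rule combination_div_eq[OF 3])
        (algebra, use det in algebra, algebra)
  next
    case 4
    then obtain a b where "a \<noteq> 0 \<or> b \<noteq> 0"
      "a * p1 + b * p2 = 0" "a * r1 + b * r2 = 0" "a * s1 + b * s2 = 0"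
      by (rule dependent_if_cross_eq_0)
    with indep show ?thesis by blast
  qed
qed

section \<open>Lines, directions and intersections\<close>

definition lin_vec :: "'a::field ln \<Rightarrow> 'a pt \<Rightarrow> 'a" where
  "lin_vec X e = tL X * fst e - uL X * snd e"

definition base_pt :: "'a::field ln \<Rightarrow> 'a pt" where
  "base_pt l = (if uL l = 0 then (- vL l, 0) else (0, vL l))"

definition dir :: "'a::field ln \<Rightarrow> 'a pt" where
  "dir l = (uL l, tL l)"

definition along :: "'a::field pt \<Rightarrow> 'a pt \<Rightarrow> 'a \<Rightarrow> 'a pt" where
  "along P e s = (fst P + s * fst e, snd P + s * snd e)"

lemma lin_along: "lin X (along P e s) = lin X P + s * lin_vec X e"
  by (simp add: lin_def lin_vec_def along_def algebra_simps)

lemma lin_base_pt: "is_line l \<Longrightarrow> lin l (base_pt l) = 0"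
  by (auto simp: is_line_def lin_def base_pt_def)

lemma lin_vec_dir_self: "lin_vec l (dir l) = 0"
  by (simp add: lin_vec_def dir_def mult.commute)

lemma lin_along_dir: "is_line l \<Longrightarrow> lin l (along (base_pt l) (dir l) s) = 0"
  by (simp add: lin_along lin_base_pt lin_vec_dir_self)

lemma dir_nonzero: "is_line l \<Longrightarrow> dir l \<noteq> (0, 0)"
  by (auto simp: is_line_def dir_def)

lemma lin_vec_dir_eq_0_iff: "lin_vec X (dir l) = 0 \<longleftrightarrow> parallel l X"
  by (auto simp: lin_vec_def dir_def parallel_def algebra_simps)

lemma parallel_sym: "parallel L M \<longleftrightarrow> parallel M L"
  by (auto simp: parallel_def algebra_simps)

lemma parallel_refl: "parallel L L"
  by (simp add: parallel_def mult.commute)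

lemma crosses_if_not_parallel: "\<not> parallel l X \<Longrightarrow> \<not> parallel l Y \<Longrightarrow> crosses l X Y"
  by (auto simp: crosses_def parallel_refl)

lemma crosses_sym: "crosses l X Y = crosses l Y X"
  by (auto simp: crosses_def)

lemma parallel_lines_same_normal:
  "is_line L \<Longrightarrow> is_line M \<Longrightarrow> parallel L M \<Longrightarrow> tL L = tL M \<and> uL L = uL M"
  by (auto simp: is_line_def parallel_def)

lemma ln_eq_iff: "L = M \<longleftrightarrow> tL L = tL M \<and> uL L = uL M \<and> vL L = vL M"
  by (cases L; cases M; simp add: tL_def uL_def vL_def)

lemma parallel_common_point_eq:
  assumes "is_line L" "is_line M" "parallel L M" "lin L p = 0" "lin M p = 0"
  shows "L = M"
proof -
  have "tL L = tL M" "uL L = uL M" using parallel_lines_same_normal assms(1-3) by blast+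
  moreover from this have "vL L - vL M = lin L p - lin M p" by (simp add: lin_def)
  ultimately show ?thesis using assms(4,5) by (simp add: ln_eq_iff)
qed

lemma parallel_trans:
  "is_line L \<Longrightarrow> is_line M \<Longrightarrow> is_line N \<Longrightarrow> parallel L M \<Longrightarrow> parallel L N \<Longrightarrow> parallel M N"
  by (drule (2) parallel_lines_same_normal)+ (simp add: parallel_def mult.commute)

lemma exists_transversal_dir:
  assumes "is_line L" "is_line M"
  obtains e where "lin_vec L e \<noteq> 0" "lin_vec M e \<noteq> 0"
proof -
  txt \<open>A normalized line annihilates at most one of the vectors (1,0), (0,1), (1,1).\<close>
  consider "lin_vec L (1, 0) \<noteq> 0 \<and> lin_vec M (1, 0) \<noteq> 0"
    | "lin_vec L (0, 1) \<noteq> 0 \<and> lin_vec M (0, 1) \<noteq> 0"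
    | "lin_vec L (1, 1) \<noteq> 0 \<and> lin_vec M (1, 1) \<noteq> 0"
    using assms by (auto simp: is_line_def lin_vec_def) (metis zero_neq_one)+
  then show ?thesis using that by metis
qed

lemma is_quadD:
  assumes "is_quad A B A' B'"
  shows "is_line A" "is_line B" "is_line A'" "is_line B'"
    and "\<not> parallel A B" "\<not> parallel A B'" "\<not> parallel A' B" "\<not> parallel A' B'"
    and "\<not> parallel B A" "\<not> parallel B' A" "\<not> parallel B A'" "\<not> parallel B' A'"
  using assms parallel_sym[of A B] parallel_sym[of A' B'] parallel_sym[of B A'] parallel_sym[of B' A]
  by (auto simp: is_quad_def)

lemma meet_unique:
  assumes "\<not> parallel L M" "lin L p = 0" "lin M p = 0" "lin L q = 0" "lin M q = 0"
  shows "p = q"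
proof -
  define D where "D = tL L * uL M - uL L * tL M"
  have D: "D \<noteq> 0" using assms(1) by (simp add: parallel_def D_def)
  have "D * (fst p - fst q) = uL M * (lin L p - lin L q) - uL L * (lin M p - lin M q)"
    and "D * (snd p - snd q) = tL M * (lin L p - lin L q) - tL L * (lin M p - lin M q)"
    by (simp_all add: D_def lin_def algebra_simps)
  with D assms(2-5) have "fst p = fst q" "snd p = snd q" by simp_all
  then show ?thesis by (simp add: prod_eq_iff)
qed

lemma meet_eqI:
  assumes "\<not> parallel L M" "lin L p = 0" "lin M p = 0"
  shows "meet L M = p"
  unfolding meet_def on_line_def
proof (rule the_equality)
  show "lin L p = 0 \<and> lin M p = 0" using assms(2,3) ..
  show "\<And>q. lin L q = 0 \<and> lin M q = 0 \<Longrightarrow> q = p"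
    using meet_unique[OF assms] by blast
qed

lemma meet_commute: "meet L M = meet M L"
  by (simp add: meet_def conj_commute)

lemma meet_along:
  assumes "is_line X" "\<not> parallel X M"
  shows "meet X M = along (base_pt X) (dir X) (- lin M (base_pt X) / lin_vec M (dir X))"
proof (rule meet_eqI[OF assms(2)])
  have "lin_vec M (dir X) \<noteq> 0" using assms(2) lin_vec_dir_eq_0_iff by blast
  then show "lin M (along (base_pt X) (dir X) (- lin M (base_pt X) / lin_vec M (dir X))) = 0"
    by (simp add: lin_along)
qed (rule lin_along_dir[OF assms(1)])

lemma lin_meet:
  assumes "is_line X" "\<not> parallel X M"
  shows "lin X (meet X M) = 0" "lin M (meet X M) = 0"
proof -
  have "lin_vec M (dir X) \<noteq> 0" using assms(2) lin_vec_dir_eq_0_iff by blast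
  then show "lin X (meet X M) = 0" "lin M (meet X M) = 0"
    by (simp_all add: meet_along[OF assms] lin_along lin_base_pt[OF assms(1)] lin_vec_dir_self)
qed

lemma midpt_along:
  fixes P e :: "'a::field pt"
  assumes "(2::'a) \<noteq> 0"
  shows "midpt (along P e s1) (along P e s2) = along P e ((s1 + s2) / 2)"
  using assms by (simp add: midpt_def along_def field_simps)

lemma along_eq_iff: "e \<noteq> (0, 0) \<Longrightarrow> along P e s1 = along P e s2 \<longleftrightarrow> s1 = s2"
  by (cases e) (auto simp: along_def)

lemma lin_midpt:
  fixes p q :: "'a::field pt"
  assumes "(2::'a) \<noteq> 0"
  shows "2 * lin L (midpt p q) = lin L p + lin L q"
proof -
  have half: "x / 2 * 2 = x" for x :: 'a using assms by simp
  have "2 * lin L (midpt p q)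
      = tL L * ((fst p + fst q) / 2 * 2) - uL L * ((snd p + snd q) / 2 * 2) + 2 * vL L"
    by (simp add: lin_def midpt_def algebra_simps)
  also have "\<dots> = lin L p + lin L q"
    by (simp only: half) (simp add: lin_def algebra_simps)
  finally show ?thesis .
qed

lemma midpt_cancel_left:
  fixes p q r :: "'a::field pt"
  assumes "(2::'a) \<noteq> 0" "midpt p q = midpt p r"
  shows "q = r"
  using assms by (auto simp: midpt_def prod_eq_iff)

lemma midpt_midpt_swap: "midpt (midpt p q) (midpt r s) = midpt (midpt p r) (midpt q s)"
  by (simp add: midpt_def add_divide_distrib[symmetric] algebra_simps)

lemma centroid_eq_midpt_midpt:
  "centroid A B A' B' = midpt (midpt (meet A B) (meet A B')) (midpt (meet A' B) (meet A' B'))"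
  by (simp add: centroid_def midpt_def Let_def meet_commute[of B A'] meet_commute[of B' A]
      divide_divide_eq_left add_divide_distrib[symmetric] algebra_simps)

lemma centroid_swap: "centroid B A B' A' = centroid A B A' B'"
  by (simp add: centroid_eq_midpt_midpt midpt_midpt_swap meet_commute)

section \<open>Line pairs restricted to a line\<close>

definition pair_poly :: "'a::field ln \<Rightarrow> 'a ln \<Rightarrow> 'a pt \<Rightarrow> 'a" where
  "pair_poly X Y p = lin X p * lin Y p"

definition quad_coeff :: "'a::field ln \<Rightarrow> 'a ln \<Rightarrow> 'a pt \<Rightarrow> 'a" where
  "quad_coeff X Y e = lin_vec X e * lin_vec Y e"

definition lin_coeff :: "'a::field ln \<Rightarrow> 'a ln \<Rightarrow> 'a pt \<Rightarrow> 'a pt \<Rightarrow> 'a" where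
  "lin_coeff X Y P e = lin X P * lin_vec Y e + lin Y P * lin_vec X e"

lemma pair_poly_sym: "pair_poly X Y = pair_poly Y X"
  by (simp add: pair_poly_def mult.commute fun_eq_iff)

lemma pair_poly_along:
  "pair_poly X Y (along P e s) = quad_coeff X Y e * s\<^sup>2 + lin_coeff X Y P e * s + pair_poly X Y P"
  by (simp add: pair_poly_def quad_coeff_def lin_coeff_def lin_along power2_eq_square algebra_simps)

lemma pencil_member_along:
  "a * pair_poly A A' (along P e s) + b * pair_poly B B' (along P e s) + c
   = (a * quad_coeff A A' e + b * quad_coeff B B' e) * s\<^sup>2
     + (a * lin_coeff A A' P e + b * lin_coeff B B' P e) * s
     + (a * pair_poly A A' P + b * pair_poly B B' P + c)"
  by (simp add: pair_poly_along algebra_simps)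

lemma quad_coeff_sym: "quad_coeff X Y e = quad_coeff Y X e"
  by (simp add: quad_coeff_def mult.commute)

lemma lin_coeff_sym: "lin_coeff X Y P e = lin_coeff Y X P e"
  by (simp add: lin_coeff_def add.commute)

lemma quad_coeff_dir_eq_0_iff: "quad_coeff X Y (dir l) = 0 \<longleftrightarrow> parallel l X \<or> parallel l Y"
  by (simp add: quad_coeff_def lin_vec_dir_eq_0_iff)

lemma pair_coeffs_along_factor:
  assumes "is_line X"
  shows "quad_coeff X Y (dir X) = 0" "lin_coeff X Y (base_pt X) (dir X) = 0"
  by (simp_all add: quad_coeff_def lin_coeff_def lin_vec_dir_self lin_base_pt[OF assms])

lemma sum_meet_params:
  assumes "lin_vec M e \<noteq> 0" "lin_vec N e \<noteq> 0"
  shows "- lin M P / lin_vec M e - lin N P / lin_vec N e = - lin_coeff M N P e / quad_coeff M N e"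
  using assms by (simp add: lin_coeff_def quad_coeff_def field_simps)

lemma midpt_meets_along:
  fixes X Y Z :: "'a::field ln"
  assumes "(2::'a) \<noteq> 0" "is_line X" "\<not> parallel X Y" "\<not> parallel X Z"
  shows "midpt (meet X Y) (meet X Z) = along (base_pt X) (dir X)
            (- lin_coeff Y Z (base_pt X) (dir X) / (2 * quad_coeff Y Z (dir X)))"
proof -
  have "lin_vec Y (dir X) \<noteq> 0" "lin_vec Z (dir X) \<noteq> 0"
    using assms(3,4) lin_vec_dir_eq_0_iff by blast+
  then show ?thesis
    using assms sum_meet_params[of Y "dir X" Z "base_pt X"]
    by (simp add: meet_along midpt_along) (simp add: field_simps)
qed

lemma mid_along:
  fixes X Y l :: "'a::field ln"
  assumes "(2::'a) \<noteq> 0" "is_line l" "\<not> parallel l X" "\<not> parallel l Y"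
  shows "mid X Y l = Fin (along (base_pt l) (dir l)
            (- lin_coeff X Y (base_pt l) (dir l) / (2 * quad_coeff X Y (dir l))))"
  using assms by (simp add: mid_def midpt_meets_along)

lemma mid_sym: "mid X Y l = mid Y X l"
  by (auto simp: mid_def midpt_def add.commute)

lemma lin_mid:
  fixes X Y l :: "'a::field ln"
  assumes "(2::'a) \<noteq> 0" "is_line l" "mid X Y l = Fin p"
  shows "lin l p = 0"
proof -
  have nX: "\<not> parallel l X" and nY: "\<not> parallel l Y" and p: "p = midpt (meet l X) (meet l Y)"
    using assms(3) by (auto simp: mid_def infpt_def split: if_splits)
  have "2 * lin l p = 0"
    using lin_midpt[OF assms(1)] lin_meet[OF assms(2) nX] lin_meet[OF assms(2) nY] p by simp
  then show ?thesis using assms(1) by simp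
qed

lemma lin_bis_mid:
  fixes A B A' B' l :: "'a::field ln"
  assumes "(2::'a) \<noteq> 0" "is_line l" "bis_mid A B A' B' l = Fin p"
  shows "lin l p = 0"
  using assms lin_mid[OF assms(1,2)] by (auto simp: bis_mid_def split: if_splits)

section \<open>Bisectors\<close>

text \<open>If l is parallel to X, then mid X Y l is at infinity while mid Z W l is finite, so the
  condition on the left says that l does not cross X, Y.\<close>

lemma mids_agree_iff_of_parallel:
  fixes X Y Z W l :: "'a::field ln"
  defines "P \<equiv> base_pt l" and "e \<equiv> dir l"
  assumes lines: "is_line X" "is_line Z" "is_line W" "is_line l"
    and nXZ: "\<not> parallel X Z" and nXW: "\<not> parallel X W" and pX: "parallel l X"
  shows "(crosses l X Y \<and> crosses l Z W \<longrightarrow> mid X Y l = mid Z W l) \<longleftrightarrow>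
         lin_coeff X Y P e * quad_coeff Z W e = lin_coeff Z W P e * quad_coeff X Y e"
proof -
  have nZ: "\<not> parallel l Z" and nW: "\<not> parallel l W"
    using parallel_trans[OF lines(4,1)] lines(2,3) pX nXZ nXW by blast+
  have "crosses l Z W" using crosses_if_not_parallel[OF nZ nW] .
  moreover have "mid X Y l \<noteq> mid Z W l" using pX nZ nW by (simp add: mid_def infpt_def)
  moreover have "\<not> crosses l X Y \<longleftrightarrow> lin X P = 0 \<or> lin_vec Y e = 0"
  proof -
    have "l = X \<longleftrightarrow> lin X P = 0"
      using parallel_common_point_eq[OF lines(4,1) pX lin_base_pt[OF lines(4)]]
        lin_base_pt[OF lines(4)]
      unfolding P_def by auto
    then show ?thesis
      using pX lin_vec_dir_eq_0_iff[of Y l] by (auto simp: crosses_def e_def parallel_refl)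
  qed
  moreover have "quad_coeff Z W e \<noteq> 0" "quad_coeff X Y e = 0"
    using nZ nW pX by (simp_all add: quad_coeff_dir_eq_0_iff e_def)
  moreover have "lin_coeff X Y P e = lin X P * lin_vec Y e"
    using pX lin_vec_dir_eq_0_iff[of X l] by (simp add: lin_coeff_def e_def)
  ultimately show ?thesis by auto
qed

lemma mids_agree_iff:
  fixes X Y Z W l :: "'a::field ln"
  defines "P \<equiv> base_pt l" and "e \<equiv> dir l"
  assumes two: "(2::'a) \<noteq> 0"
    and lines: "is_line X" "is_line Y" "is_line Z" "is_line W" "is_line l"
    and nXZ: "\<not> parallel X Z" and nXW: "\<not> parallel X W"
    and nYZ: "\<not> parallel Y Z" and nYW: "\<not> parallel Y W"
  shows "(crosses l X Y \<and> crosses l Z W \<longrightarrow> mid X Y l = mid Z W l) \<longleftrightarrow>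
         lin_coeff X Y P e * quad_coeff Z W e = lin_coeff Z W P e * quad_coeff X Y e"
proof (cases "parallel l X \<or> parallel l Y \<or> parallel l Z \<or> parallel l W")
  case True
  have swap: "\<not> parallel Z X" "\<not> parallel Z Y" "\<not> parallel W X" "\<not> parallel W Y"
    using nXZ nXW nYZ nYW parallel_sym by blast+
  from True consider "parallel l X" | "parallel l Y" | "parallel l Z" | "parallel l W" by blast
  then show ?thesis
  proof cases
    case 1
    show ?thesis unfolding P_def e_def
      using mids_agree_iff_of_parallel[OF lines(1,3,4,5) nXZ nXW 1] .
  next
    case 2
    show ?thesis unfolding P_def e_def
      using mids_agree_iff_of_parallel[OF lines(2,3,4,5) nYZ nYW 2, of X]
      by (simp add: crosses_sym[of l Y] mid_sym[of Y] lin_coeff_sym[of Y] quad_coeff_sym[of Y])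
  next
    case 3
    show ?thesis unfolding P_def e_def
      using mids_agree_iff_of_parallel[OF lines(3,1,2,5) swap(1,2) 3, of W] by auto
  next
    case 4
    show ?thesis unfolding P_def e_def
      using mids_agree_iff_of_parallel[OF lines(4,1,2,5) swap(3,4) 4, of Z]
      by (auto simp: crosses_sym[of l W] mid_sym[of W] lin_coeff_sym[of W] quad_coeff_sym[of W])
  qed
next
  case False
  then have "crosses l X Y" "crosses l Z W"
    and "quad_coeff X Y e \<noteq> 0" "quad_coeff Z W e \<noteq> 0"
    by (simp_all add: crosses_if_not_parallel quad_coeff_dir_eq_0_iff e_def)
  with False show ?thesis
    using two dir_nonzero[OF lines(5)]
    by (simp add: mid_along[OF two lines(5)] along_eq_iff P_def e_def) (simp add: field_simps)
qed

lemma bisects_iff: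
  fixes A B A' B' l :: "'a::field ln"
  assumes "(2::'a) \<noteq> 0" "is_quad A B A' B'" "is_line l"
  shows "bisects A B A' B' l \<longleftrightarrow>
    lin_coeff A A' (base_pt l) (dir l) * quad_coeff B B' (dir l) =
    lin_coeff B B' (base_pt l) (dir l) * quad_coeff A A' (dir l)"
  using mids_agree_iff[OF assms(1) is_quadD(1,3,2,4)[OF assms(2)] assms(3) is_quadD(5-8)[OF assms(2)]]
    assms(3)
  by (simp add: bisects_def)

section \<open>Coefficients of line pairs and the form of the quadrilateral\<close>

definition coeff_xx :: "'a::field ln \<Rightarrow> 'a ln \<Rightarrow> 'a" where
  "coeff_xx X Y = tL X * tL Y"

definition coeff_xy :: "'a::field ln \<Rightarrow> 'a ln \<Rightarrow> 'a" where
  "coeff_xy X Y = - (tL X * uL Y + uL X * tL Y)"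

definition coeff_yy :: "'a::field ln \<Rightarrow> 'a ln \<Rightarrow> 'a" where
  "coeff_yy X Y = uL X * uL Y"

definition coeff_x :: "'a::field ln \<Rightarrow> 'a ln \<Rightarrow> 'a" where
  "coeff_x X Y = tL X * vL Y + vL X * tL Y"

definition coeff_y :: "'a::field ln \<Rightarrow> 'a ln \<Rightarrow> 'a" where
  "coeff_y X Y = - (uL X * vL Y + vL X * uL Y)"

definition coeff_1 :: "'a::field ln \<Rightarrow> 'a ln \<Rightarrow> 'a" where
  "coeff_1 X Y = vL X * vL Y"

lemmas pair_coeff_defs = coeff_xx_def coeff_xy_def coeff_yy_def coeff_x_def coeff_y_def coeff_1_def

lemma pair_poly_coeffs:
  "pair_poly X Y p =
      coeff_xx X Y * (fst p)\<^sup>2 + coeff_xy X Y * fst p * snd p + coeff_yy X Y * (snd p)\<^sup>2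
    + coeff_x X Y * fst p + coeff_y X Y * snd p + coeff_1 X Y"
  by (simp add: pair_poly_def lin_def pair_coeff_defs power2_eq_square algebra_simps)

lemma quad_coeff_coeffs:
  "quad_coeff X Y e =
     coeff_xx X Y * (fst e)\<^sup>2 + coeff_xy X Y * fst e * snd e + coeff_yy X Y * (snd e)\<^sup>2"
  by (simp add: quad_coeff_def lin_vec_def pair_coeff_defs power2_eq_square algebra_simps)

lemma pencil_quad_coeff_coeffs:
  "a * quad_coeff X Y e + b * quad_coeff Z W e =
      (a * coeff_xx X Y + b * coeff_xx Z W) * (fst e)\<^sup>2
    + (a * coeff_xy X Y + b * coeff_xy Z W) * fst e * snd e
    + (a * coeff_yy X Y + b * coeff_yy Z W) * (snd e)\<^sup>2"
  by (simp add: quad_coeff_coeffs algebra_simps)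

lemma lin_coeff_coeffs:
  "lin_coeff X Y P e =
     (2 * coeff_xx X Y * fst P + coeff_xy X Y * snd P + coeff_x X Y) * fst e
   + (coeff_xy X Y * fst P + 2 * coeff_yy X Y * snd P + coeff_y X Y) * snd e"
  by (simp add: lin_coeff_def lin_vec_def lin_def pair_coeff_defs algebra_simps)

lemma qform_dirs_coeffs:
  "qform A B A' B' (uL l1, tL l1) (uL l2, tL l2) =
     qalpha A B A' B' * coeff_xx l1 l2 + qbeta A B A' B' * coeff_xy l1 l2
   + qgamma A B A' B' * coeff_yy l1 l2"
  by (simp add: qform_def pair_coeff_defs algebra_simps)

lemma q_coeffs_cross:
  "qalpha A B A' B' = - (coeff_xy A A' * coeff_yy B B' - coeff_yy A A' * coeff_xy B B')"
  "qbeta A B A' B' = - (coeff_yy A A' * coeff_xx B B' - coeff_xx A A' * coeff_yy B B')"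
  "qgamma A B A' B' = - (coeff_xx A A' * coeff_xy B B' - coeff_xy A A' * coeff_xx B B')"
  by (simp_all add: qalpha_def qbeta_def qgamma_def pair_coeff_defs algebra_simps)

lemma q_coeffs_annihilate:
  "qalpha A B A' B' * coeff_xx A A' + qbeta A B A' B' * coeff_xy A A'
     + qgamma A B A' B' * coeff_yy A A' = 0"
  "qalpha A B A' B' * coeff_xx B B' + qbeta A B A' B' * coeff_xy B B'
     + qgamma A B A' B' * coeff_yy B B' = 0"
  by (simp_all add: q_coeffs_cross algebra_simps)

lemma pencil_quad_coeffs_independent:
  assumes "is_quad A B A' B'" and "\<And>e. a * quad_coeff A A' e + b * quad_coeff B B' e = 0"
  shows "a = 0 \<and> b = 0"
proof -
  have "quad_coeff A A' (dir A) = 0" "quad_coeff B B' (dir B) = 0"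
    by (simp_all add: quad_coeff_def lin_vec_dir_self)
  moreover have "quad_coeff B B' (dir A) \<noteq> 0" "quad_coeff A A' (dir B) \<noteq> 0"
    using is_quadD(5,6,9,11)[OF assms(1)] by (simp_all add: quad_coeff_dir_eq_0_iff)
  ultimately show ?thesis using assms(2)[of "dir A"] assms(2)[of "dir B"] by simp
qed

lemma quad_coeffs_not_both_0:
  assumes Q: "is_quad A B A' B'" and l: "is_line l"
  shows "quad_coeff A A' (dir l) \<noteq> 0 \<or> quad_coeff B B' (dir l) \<noteq> 0"
proof (rule ccontr)
  assume "\<not> ?thesis"
  then have "parallel l A \<or> parallel l A'" "parallel l B \<or> parallel l B'"
    by (simp_all add: quad_coeff_dir_eq_0_iff)
  then show False
    using is_quadD[OF Q] parallel_trans[OF l] by blast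
qed

section \<open>Factorizations give Q-pairs\<close>

lemma factorization_along:
  fixes X Y Z W L M :: "'a::field ln"
  assumes "(2::'a) \<noteq> 0"
    and "\<forall>p. a * pair_poly X Y p + b * pair_poly Z W p + c = k * pair_poly L M p"
  shows "a * quad_coeff X Y e + b * quad_coeff Z W e = k * quad_coeff L M e"
    and "a * lin_coeff X Y P e + b * lin_coeff Z W P e = k * lin_coeff L M P e"
proof -
  have "(a * quad_coeff X Y e + b * quad_coeff Z W e - k * quad_coeff L M e) * s\<^sup>2
      + (a * lin_coeff X Y P e + b * lin_coeff Z W P e - k * lin_coeff L M P e) * s
      + (a * pair_poly X Y P + b * pair_poly Z W P + c - k * pair_poly L M P) = 0" for s
    using assms(2)[rule_format, of "along P e s"]
    by (simp add: pair_poly_along algebra_simps)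
  from quadratic_eq_0_imp_coeffs_eq_0[OF assms(1) this]
  show "a * quad_coeff X Y e + b * quad_coeff Z W e = k * quad_coeff L M e"
    and "a * lin_coeff X Y P e + b * lin_coeff Z W P e = k * lin_coeff L M P e"
    by simp_all
qed

lemma factorization_imp_bisects:
  fixes A B A' B' L M :: "'a::field ln"
  assumes two: "(2::'a) \<noteq> 0" and Q: "is_quad A B A' B'" and L: "is_line L"
    and ab: "a \<noteq> 0 \<or> b \<noteq> 0"
    and fact: "\<forall>p. a * pair_poly A A' p + b * pair_poly B B' p + c = k * pair_poly L M p"
  shows "bisects A B A' B' L"
proof -
  have "a * quad_coeff A A' (dir L) + b * quad_coeff B B' (dir L) = 0"
    and "a * lin_coeff A A' (base_pt L) (dir L) + b * lin_coeff B B' (base_pt L) (dir L) = 0"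
    using factorization_along[OF two fact] by (simp_all add: pair_coeffs_along_factor[OF L])
  from det_eq_0_if_kernel[OF ab this] show ?thesis
    using bisects_iff[OF two Q L] by simp
qed

lemma factorization_quad_parts:
  fixes X Y Z W L M :: "'a::field ln"
  assumes "(2::'a) \<noteq> 0"
    and "\<forall>p. a * pair_poly X Y p + b * pair_poly Z W p + c = k * pair_poly L M p"
  shows "a * coeff_xx X Y + b * coeff_xx Z W = k * coeff_xx L M"
    and "a * coeff_xy X Y + b * coeff_xy Z W = k * coeff_xy L M"
    and "a * coeff_yy X Y + b * coeff_yy Z W = k * coeff_yy L M"
proof -
  have "(a * coeff_xx X Y + b * coeff_xx Z W - k * coeff_xx L M) * (fst e)\<^sup>2
      + (a * coeff_xy X Y + b * coeff_xy Z W - k * coeff_xy L M) * fst e * snd e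
      + (a * coeff_yy X Y + b * coeff_yy Z W - k * coeff_yy L M) * (snd e)\<^sup>2 = 0" for e
    using factorization_along(1)[OF assms, of e] by (simp add: quad_coeff_coeffs algebra_simps)
  from binary_form_eq_0_imp_coeffs_eq_0[OF this]
  show "a * coeff_xx X Y + b * coeff_xx Z W = k * coeff_xx L M"
    and "a * coeff_xy X Y + b * coeff_xy Z W = k * coeff_xy L M"
    and "a * coeff_yy X Y + b * coeff_yy Z W = k * coeff_yy L M"
    by simp_all
qed

lemma factorization_imp_q_orth:
  fixes A B A' B' L M :: "'a::field ln"
  assumes two: "(2::'a) \<noteq> 0" and k: "k \<noteq> 0"
    and fact: "\<forall>p. a * pair_poly A A' p + b * pair_poly B B' p + c = k * pair_poly L M p"
  shows "q_orth A B A' B' L M"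
proof -
  note parts = factorization_quad_parts[OF two fact]
  have "k * qform A B A' B' (uL L, tL L) (uL M, tL M)
      = qalpha A B A' B' * (k * coeff_xx L M) + qbeta A B A' B' * (k * coeff_xy L M)
        + qgamma A B A' B' * (k * coeff_yy L M)"
    by (simp add: qform_dirs_coeffs algebra_simps)
  also have "\<dots> = a * (qalpha A B A' B' * coeff_xx A A' + qbeta A B A' B' * coeff_xy A A'
                        + qgamma A B A' B' * coeff_yy A A')
                 + b * (qalpha A B A' B' * coeff_xx B B' + qbeta A B A' B' * coeff_xy B B'
                        + qgamma A B A' B' * coeff_yy B B')"
    by (simp only: parts[symmetric]) (simp add: algebra_simps)
  also have "\<dots> = 0" by (simp add: q_coeffs_annihilate)
  finally show ?thesis using k by (simp add: q_orth_def)
qed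

lemma midpt_meets_eq_if_proportional:
  fixes X Z W L M :: "'a::field ln"
  defines "P \<equiv> base_pt X" and "e \<equiv> dir X"
  assumes two: "(2::'a) \<noteq> 0" and X: "is_line X"
    and n: "\<not> parallel X Z" "\<not> parallel X W" "\<not> parallel X L" "\<not> parallel X M"
    and k: "k \<noteq> 0"
    and q: "b * quad_coeff Z W e = k * quad_coeff L M e"
    and r: "b * lin_coeff Z W P e = k * lin_coeff L M P e"
  shows "midpt (meet X Z) (meet X W) = midpt (meet X L) (meet X M)"
proof -
  have "quad_coeff L M e \<noteq> 0" "quad_coeff Z W e \<noteq> 0"
    using n by (simp_all add: quad_coeff_dir_eq_0_iff e_def)
  with q k have "b \<noteq> 0" by auto
  have "lin_coeff Z W P e / (2 * quad_coeff Z W e)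
      = (b * lin_coeff Z W P e) / (2 * (b * quad_coeff Z W e))"
    using \<open>b \<noteq> 0\<close> by simp
  also have "\<dots> = lin_coeff L M P e / (2 * quad_coeff L M e)"
    using q r k by simp
  finally show ?thesis
    by (simp add: midpt_meets_along[OF two X] n P_def e_def)
qed

lemma factorization_midpoints_centroid:
  fixes X Y Z W L M :: "'a::field ln"
  assumes two: "(2::'a) \<noteq> 0" and X: "is_line X" and Y: "is_line Y"
    and n: "\<not> parallel X Z" "\<not> parallel X W" "\<not> parallel Y Z" "\<not> parallel Y W"
    and nL: "\<not> parallel L X" "\<not> parallel L Y" and nM: "\<not> parallel M X" "\<not> parallel M Y"
    and k: "k \<noteq> 0"
    and fact: "\<forall>p. a * pair_poly X Y p + b * pair_poly Z W p + c = k * pair_poly L M p"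
  shows "midpt (midpt (meet L X) (meet L Y)) (midpt (meet M X) (meet M Y)) = centroid X Z Y W"
proof -
  txt \<open>On a side T of the pair X, Y the term of X Y vanishes, so the restrictions of
    b * (Z W) + c and k * (L M) to T agree and have the same midpoint of roots.\<close>
  have side: "midpt (meet T Z) (meet T W) = midpt (meet T L) (meet T M)"
    if T: "is_line T" "T = X \<or> T = Y" "\<not> parallel T Z" "\<not> parallel T W"
      "\<not> parallel T L" "\<not> parallel T M"
    for T
  proof (rule midpt_meets_eq_if_proportional[OF two T(1) T(3-6) k])
    have "quad_coeff X Y (dir T) = 0" "lin_coeff X Y (base_pt T) (dir T) = 0"
      using T(2) X Y by (auto simp: quad_coeff_def lin_coeff_def lin_vec_dir_self lin_base_pt)
    then show "b * quad_coeff Z W (dir T) = k * quad_coeff L M (dir T)"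
      and "b * lin_coeff Z W (base_pt T) (dir T) = k * lin_coeff L M (base_pt T) (dir T)"
      using factorization_along(1)[OF two fact, of "dir T"]
        factorization_along(2)[OF two fact, of "base_pt T" "dir T"] by simp_all
  qed
  have "midpt (meet X Z) (meet X W) = midpt (meet X L) (meet X M)"
    and "midpt (meet Y Z) (meet Y W) = midpt (meet Y L) (meet Y M)"
    using side X Y n nL nM parallel_sym by blast+
  then show ?thesis
    by (simp add: centroid_eq_midpt_midpt midpt_midpt_swap meet_commute)
qed

lemma factorization_coeff_eq_0_if_parallel:
  fixes X Y Z W L M T :: "'a::field ln"
  assumes "(2::'a) \<noteq> 0"
    and "\<forall>p. a * pair_poly X Y p + b * pair_poly Z W p + c = k * pair_poly L M p"
    and "parallel T X \<or> parallel T Y" "\<not> parallel T Z" "\<not> parallel T W" "parallel T L \<or> parallel T M"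
  shows "b = 0"
proof -
  have "quad_coeff X Y (dir T) = 0" "quad_coeff L M (dir T) = 0"
    and "quad_coeff Z W (dir T) \<noteq> 0"
    using assms(3-6) by (simp_all add: quad_coeff_dir_eq_0_iff)
  then show ?thesis using factorization_along(1)[OF assms(1,2), of "dir T"] by simp
qed

lemma factorization_imp_antipodal:
  fixes A B A' B' L M :: "'a::field ln"
  assumes two: "(2::'a) \<noteq> 0" and Q: "is_quad A B A' B'" and L: "is_line L" and M: "is_line M"
    and ab: "a \<noteq> 0 \<or> b \<noteq> 0" and k: "k \<noteq> 0"
    and fact: "\<forall>p. a * pair_poly A A' p + b * pair_poly B B' p + c = k * pair_poly L M p"
  shows "antipodal A B A' B' L M"
proof -
  have fact_BA: "\<forall>p. b * pair_poly B B' p + a * pair_poly A A' p + c = k * pair_poly L M p"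
    using fact by (simp add: ac_simps)
  have fact_ML: "\<forall>p. a * pair_poly A A' p + b * pair_poly B B' p + c = k * pair_poly M L p"
    using fact by (simp add: pair_poly_sym[of M])
  consider (cross_A) "\<not> parallel L A" "\<not> parallel L A'" "\<not> parallel M A" "\<not> parallel M A'"
    | (cross_B) "\<not> parallel L B" "\<not> parallel L B'" "\<not> parallel M B" "\<not> parallel M B'"
    | (parallel_sides) "parallel A L \<or> parallel A M \<or> parallel A' L \<or> parallel A' M"
        "parallel B L \<or> parallel B M \<or> parallel B' L \<or> parallel B' M"
    using parallel_sym by blast
  then show ?thesis
  proof cases
    case cross_A
    then have "bis_mid A B A' B' L = Fin (midpt (meet L A) (meet L A'))"
      and "bis_mid A B A' B' M = Fin (midpt (meet M A) (meet M A'))"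
      by (simp_all add: bis_mid_def mid_def crosses_if_not_parallel)
    moreover have "midpt (midpt (meet L A) (meet L A')) (midpt (meet M A) (meet M A'))
        = centroid A B A' B'"
      by (rule factorization_midpoints_centroid[OF two is_quadD(1,3)[OF Q] is_quadD(5-8)[OF Q]
            cross_A k fact])
    ultimately show ?thesis by (auto simp: antipodal_def)
  next
    case cross_B
    have "bisects A B A' B' L" "bisects A B A' B' M"
      using factorization_imp_bisects[OF two Q L ab fact]
        factorization_imp_bisects[OF two Q M ab fact_ML]
      by simp_all
    with cross_B have "bis_mid A B A' B' L = Fin (midpt (meet L B) (meet L B'))"
      and "bis_mid A B A' B' M = Fin (midpt (meet M B) (meet M B'))"
      by (auto simp: bis_mid_def bisects_def mid_def crosses_if_not_parallel)
    moreover have "midpt (midpt (meet L B) (meet L B')) (midpt (meet M B) (meet M B'))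
        = centroid A B A' B'"
      using factorization_midpoints_centroid[OF two is_quadD(2,4)[OF Q] is_quadD(9,11,10,12)[OF Q]
            cross_B k fact_BA]
      by (simp add: centroid_swap)
    ultimately show ?thesis by (auto simp: antipodal_def)
  next
    case parallel_sides
    have "b = 0"
      using parallel_sides(1) factorization_coeff_eq_0_if_parallel[OF two fact, of A]
        factorization_coeff_eq_0_if_parallel[OF two fact, of A'] is_quadD(5-8)[OF Q]
      by (auto simp: parallel_refl)
    moreover have "a = 0"
      using parallel_sides(2) factorization_coeff_eq_0_if_parallel[OF two fact_BA, of B]
        factorization_coeff_eq_0_if_parallel[OF two fact_BA, of B'] is_quadD(9-12)[OF Q]
      by (auto simp: parallel_refl)
    ultimately show ?thesis using ab by simp
  qed
qed

lemma factorization_imp_q_pair: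
  fixes A B A' B' L M :: "'a::field ln"
  assumes two: "(2::'a) \<noteq> 0" and Q: "is_quad A B A' B'" and L: "is_line L" and M: "is_line M"
    and ab: "a \<noteq> 0 \<or> b \<noteq> 0" and k: "k \<noteq> 0"
    and fact: "\<forall>p. a * pair_poly A A' p + b * pair_poly B B' p + c = k * pair_poly L M p"
  shows "q_pair A B A' B' L M"
proof -
  have "\<forall>p. a * pair_poly A A' p + b * pair_poly B B' p + c = k * pair_poly M L p"
    using fact by (simp add: pair_poly_sym[of M])
  then show ?thesis
    unfolding q_pair_def
    using factorization_imp_bisects[OF two Q L ab fact] factorization_imp_bisects[OF two Q M ab]
      factorization_imp_antipodal[OF assms] factorization_imp_q_orth[OF two k fact]
    by blast
qed

section \<open>Q-pairs factor\<close>

lemma q_orth_imp_quad_part_in_pencil: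
  fixes A B A' B' L M :: "'a::field ln"
  assumes Q: "is_quad A B A' B'" and orth: "q_orth A B A' B' L M"
  obtains a b where "a * coeff_xx A A' + b * coeff_xx B B' = coeff_xx L M"
    "a * coeff_xy A A' + b * coeff_xy B B' = coeff_xy L M"
    "a * coeff_yy A A' + b * coeff_yy B B' = coeff_yy L M"
proof (rule in_span_if_det_eq_0)
  show "coeff_xx L M * (coeff_xy A A' * coeff_yy B B' - coeff_yy A A' * coeff_xy B B')
      + coeff_xy L M * (coeff_yy A A' * coeff_xx B B' - coeff_xx A A' * coeff_yy B B')
      + coeff_yy L M * (coeff_xx A A' * coeff_xy B B' - coeff_xy A A' * coeff_xx B B') = 0"
    using orth by (simp add: q_orth_def qform_dirs_coeffs q_coeffs_cross algebra_simps)
next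
  fix a b
  assume "a * coeff_xx A A' + b * coeff_xx B B' = 0"
    and "a * coeff_xy A A' + b * coeff_xy B B' = 0"
    and "a * coeff_yy A A' + b * coeff_yy B B' = 0"
  then have "a * quad_coeff A A' e + b * quad_coeff B B' e = 0" for e
    by (simp add: pencil_quad_coeff_coeffs)
  then show "a = 0 \<and> b = 0" by (rule pencil_quad_coeffs_independent[OF Q])
qed

lemma q_orth_imp_affine_remainder:
  fixes A B A' B' L M :: "'a::field ln"
  assumes Q: "is_quad A B A' B'" and L: "is_line L" and M: "is_line M"
    and orth: "q_orth A B A' B' L M"
  obtains a b w1 w2 w0 where "a \<noteq> 0 \<or> b \<noteq> 0"
    "\<And>e. a * quad_coeff A A' e + b * quad_coeff B B' e = quad_coeff L M e"
    "\<And>p. a * pair_poly A A' p + b * pair_poly B B' p - pair_poly L M p = w1 * fst p + w2 * snd p + w0"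
proof -
  obtain a b where xx: "a * coeff_xx A A' + b * coeff_xx B B' = coeff_xx L M"
    and xy: "a * coeff_xy A A' + b * coeff_xy B B' = coeff_xy L M"
    and yy: "a * coeff_yy A A' + b * coeff_yy B B' = coeff_yy L M"
    using q_orth_imp_quad_part_in_pencil[OF Q orth] .
  have quad: "a * quad_coeff A A' e + b * quad_coeff B B' e = quad_coeff L M e" for e
    unfolding pencil_quad_coeff_coeffs xx xy yy by (simp add: quad_coeff_coeffs)
  moreover have "a \<noteq> 0 \<or> b \<noteq> 0"
  proof -
    obtain e where "lin_vec L e \<noteq> 0" "lin_vec M e \<noteq> 0"
      using exists_transversal_dir[OF L M] .
    then show ?thesis using quad[of e] by (auto simp: quad_coeff_def)
  qed
  moreover have "a * pair_poly A A' p + b * pair_poly B B' p - pair_poly L M p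
      = (a * coeff_x A A' + b * coeff_x B B' - coeff_x L M) * fst p
      + (a * coeff_y A A' + b * coeff_y B B' - coeff_y L M) * snd p
      + (a * coeff_1 A A' + b * coeff_1 B B' - coeff_1 L M)" for p
    by (simp add: pair_poly_coeffs xx[symmetric] xy[symmetric] yy[symmetric] algebra_simps)
  ultimately show ?thesis using that by blast
qed

lemma bisector_orthogonal_to_remainder:
  fixes A B A' B' L M :: "'a::field ln"
  defines "P \<equiv> base_pt L" and "e \<equiv> dir L"
  assumes two: "(2::'a) \<noteq> 0" and Q: "is_quad A B A' B'" and L: "is_line L"
    and bis: "bisects A B A' B' L"
    and quad: "\<And>e. a * quad_coeff A A' e + b * quad_coeff B B' e = quad_coeff L M e"
    and rem: "\<And>p. a * pair_poly A A' p + b * pair_poly B B' p - pair_poly L M p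
                    = w1 * fst p + w2 * snd p + w0"
  shows "w1 * uL L + w2 * tL L = 0"
proof -
  have q: "a * quad_coeff A A' e + b * quad_coeff B B' e = 0"
    using quad[of e] by (simp add: pair_coeffs_along_factor[OF L] e_def)
  have r: "a * lin_coeff A A' P e + b * lin_coeff B B' P e = 0"
    using kernel_if_det_eq_0[OF _ q] bis bisects_iff[OF two Q L] quad_coeffs_not_both_0[OF Q L]
    by (simp add: P_def e_def)
  have "a * pair_poly A A' (along P e 1) + b * pair_poly B B' (along P e 1)
      = (a * quad_coeff A A' e + b * quad_coeff B B' e)
        + (a * lin_coeff A A' P e + b * lin_coeff B B' P e)
        + (a * pair_poly A A' P + b * pair_poly B B' P)"
    by (simp add: pair_poly_along algebra_simps)
  moreover have "pair_poly L M (along P e 1) = 0" "pair_poly L M P = 0"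
    by (simp_all add: pair_poly_def lin_along_dir lin_base_pt L P_def e_def)
  ultimately have "w1 * fst (along P e 1) + w2 * snd (along P e 1) + w0
      = w1 * fst P + w2 * snd P + w0"
    using rem[of P] rem[of "along P e 1"] q r by simp
  then show ?thesis by (simp add: along_def e_def dir_def algebra_simps)
qed

lemma normal_multiple_if_orthogonal_to_dir:
  assumes "is_line L" "w1 * uL L + w2 * tL L = 0"
  obtains m where "w1 = m * tL L" "w2 = - m * uL L"
proof (cases "uL L = 0")
  case True
  with assms have "w1 = w1 * tL L" "w2 = - w1 * uL L" by (auto simp: is_line_def)
  then show ?thesis by (rule that)
next
  case False
  with assms have "w1 = - w2 * tL L" "w2 = - (- w2) * uL L"
    by (auto simp: is_line_def add_eq_0_iff)
  then show ?thesis by (rule that)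
qed

lemma antipodal_partner_unique:
  fixes A B A' B' L M M' :: "'a::field ln"
  assumes two: "(2::'a) \<noteq> 0" and M: "is_line M" and M': "is_line M'" and "parallel M M'"
    and "antipodal A B A' B' L M" "antipodal A B A' B' L M'"
  shows "M = M'"
proof -
  obtain p q where p: "bis_mid A B A' B' L = Fin p" and q: "bis_mid A B A' B' M = Fin q"
    and c: "midpt p q = centroid A B A' B'"
    using assms(5) unfolding antipodal_def by blast
  obtain p' q' where p': "bis_mid A B A' B' L = Fin p'" and q': "bis_mid A B A' B' M' = Fin q'"
    and c': "midpt p' q' = centroid A B A' B'"
    using assms(6) unfolding antipodal_def by blast
  from p p' have "p' = p" by simp
  with c c' have "midpt p q = midpt p q'" by simp
  then have "q = q'" by (rule midpt_cancel_left[OF two])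
  then show ?thesis
    using parallel_common_point_eq[OF M M' \<open>parallel M M'\<close>]
      lin_bis_mid[OF two M q] lin_bis_mid[OF two M' q']
    by simp
qed

lemma q_pair_imp_factorization:
  fixes A B A' B' L M :: "'a::field ln"
  assumes two: "(2::'a) \<noteq> 0" and Q: "is_quad A B A' B'" and L: "is_line L" and M: "is_line M"
    and qp: "q_pair A B A' B' L M"
  obtains a b c where "a \<noteq> 0 \<or> b \<noteq> 0"
    "\<forall>p. a * pair_poly A A' p + b * pair_poly B B' p + c = pair_poly L M p"
proof -
  have bis: "bisects A B A' B' L" and anti: "antipodal A B A' B' L M"
    and orth: "q_orth A B A' B' L M"
    using qp by (simp_all add: q_pair_def)
  obtain a b w1 w2 w0 where ab: "a \<noteq> 0 \<or> b \<noteq> 0"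
    and quad: "\<And>e. a * quad_coeff A A' e + b * quad_coeff B B' e = quad_coeff L M e"
    and rem: "\<And>p. a * pair_poly A A' p + b * pair_poly B B' p - pair_poly L M p
                    = w1 * fst p + w2 * snd p + w0"
    using q_orth_imp_affine_remainder[OF Q L M orth] by blast
  have "w1 * uL L + w2 * tL L = 0"
    by (rule bisector_orthogonal_to_remainder[OF two Q L bis quad rem])
  then obtain m where m: "w1 = m * tL L" "w2 = - m * uL L"
    by (rule normal_multiple_if_orthogonal_to_dir[OF L])
  txt \<open>The remainder is m times the equation of L up to a constant, so the member of the
    pencil factors as L times the translate M' of M by m.\<close>
  define M' where "M' = (tL M, uL M, vL M + m)"
  have M': "is_line M'" and lin_M': "\<And>p. lin M' p = lin M p + m" and "parallel M M'"
    using M by (simp_all add: M'_def is_line_def lin_def parallel_def tL_def uL_def vL_def mult.commute)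
  have fact: "\<forall>p. a * pair_poly A A' p + b * pair_poly B B' p + (m * vL L - w0) = pair_poly L M' p"
  proof
    fix p
    have "a * pair_poly A A' p + b * pair_poly B B' p
        = pair_poly L M p + m * (lin L p - vL L) + w0"
      using rem[of p] m by (simp add: lin_def algebra_simps)
    moreover have "pair_poly L M' p = pair_poly L M p + m * lin L p"
      by (simp add: pair_poly_def lin_M' algebra_simps)
    ultimately show "a * pair_poly A A' p + b * pair_poly B B' p + (m * vL L - w0)
        = pair_poly L M' p"
      by (simp add: algebra_simps)
  qed
  have "q_pair A B A' B' L M'"
    using factorization_imp_q_pair[OF two Q L M' ab one_neq_zero] fact by simp
  then have "M = M'"
    using antipodal_partner_unique[OF two M M' \<open>parallel M M'\<close> anti] by (simp add: q_pair_def)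
  with ab fact show ?thesis using that by blast
qed

section \<open>Degenerations factor\<close>

lemma zero_set_lines_along:
  fixes G :: "'a::field pt \<Rightarrow> 'a"
  assumes "{p. G p = 0} = line_set L \<union> line_set M" "lin_vec L e \<noteq> 0" "lin_vec M e \<noteq> 0"
  shows "G (along P e s) = 0 \<longleftrightarrow> s = - lin L P / lin_vec L e \<or> s = - lin M P / lin_vec M e"
proof -
  have "G q = 0 \<longleftrightarrow> lin L q = 0 \<or> lin M q = 0" for q
    using assms(1) by (cases q) (auto simp: set_eq_iff line_set_def on_line_def)
  then have "G (along P e s) = 0
      \<longleftrightarrow> lin L P + s * lin_vec L e = 0 \<or> lin M P + s * lin_vec M e = 0"
    by (simp add: lin_along)
  also have "\<dots> \<longleftrightarrow> s = - lin L P / lin_vec L e \<or> s = - lin M P / lin_vec M e"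
    using assms(2,3) by (simp add: linear_eq_0_iff)
  finally show ?thesis .
qed

lemma pencil_lin_coeff_vanishes_somewhere:
  fixes A B A' B' L :: "'a::field ln"
  assumes two: "(2::'a) \<noteq> 0" and Q: "is_quad A B A' B'"
    and ab: "a \<noteq> 0 \<or> b \<noteq> 0" and eL: "lin_vec L e \<noteq> 0"
    and on_L: "\<And>s. a * pair_poly A A' (along (base_pt L) (dir L) s)
                    + b * pair_poly B B' (along (base_pt L) (dir L) s) + c = 0"
  obtains P where "a * lin_coeff A A' P e + b * lin_coeff B B' P e = 0"
proof (rule ccontr)
  assume "\<not> thesis"
  with that have nonzero: "a * lin_coeff A A' P e + b * lin_coeff B B' P e \<noteq> 0" for P by blast
  define Pc where "Pc = a * coeff_xx A A' + b * coeff_xx B B'"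
  define Rc where "Rc = a * coeff_xy A A' + b * coeff_xy B B'"
  define Sc where "Sc = a * coeff_yy A A' + b * coeff_yy B B'"
  have "(2 * Pc * fst e + Rc * snd e) * x + (Rc * fst e + 2 * Sc * snd e) * y
      + ((a * coeff_x A A' + b * coeff_x B B') * fst e
         + (a * coeff_y A A' + b * coeff_y B B') * snd e) \<noteq> 0" for x y
    using nonzero[of "(x, y)"] by (simp add: lin_coeff_coeffs Pc_def Rc_def Sc_def algebra_simps)
  note radical = affine_nonvanishing_imp_const[OF this]
  have "(a * quad_coeff A A' (dir L) + b * quad_coeff B B' (dir L)) * s\<^sup>2
      + (a * lin_coeff A A' (base_pt L) (dir L) + b * lin_coeff B B' (base_pt L) (dir L)) * s
      + (a * pair_poly A A' (base_pt L) + b * pair_poly B B' (base_pt L) + c) = 0" for s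
    using on_L[of s] by (simp add: pencil_member_along)
  from quadratic_eq_0_imp_coeffs_eq_0(1)[OF two this]
  have "a * quad_coeff A A' (dir L) + b * quad_coeff B B' (dir L) = 0" .
  then have "Pc * (uL L)\<^sup>2 + Rc * uL L * tL L + Sc * (tL L)\<^sup>2 = 0"
    by (simp add: quad_coeff_coeffs dir_def Pc_def Rc_def Sc_def algebra_simps)
  from binary_form_eq_0_if_radical[OF two radical this] eL
  have "Pc = 0" "Rc = 0" "Sc = 0" by (simp_all add: lin_vec_def)
  then have "a * quad_coeff A A' e' + b * quad_coeff B B' e' = 0" for e'
    by (simp add: pencil_quad_coeff_coeffs Pc_def Rc_def Sc_def)
  with pencil_quad_coeffs_independent[OF Q] ab show False by blast
qed

lemma degeneration_imp_factorization:
  fixes A B A' B' L M :: "'a::field ln"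
  assumes two: "(2::'a) \<noteq> 0" and Q: "is_quad A B A' B'" and L: "is_line L" and M: "is_line M"
    and ab: "a \<noteq> 0 \<or> b \<noteq> 0"
    and zeros: "{p. a * pair_poly A A' p + b * pair_poly B B' p + c = 0} = line_set L \<union> line_set M"
  obtains k where "k \<noteq> 0"
    "\<forall>p. a * pair_poly A A' p + b * pair_poly B B' p + c = k * pair_poly L M p"
proof -
  obtain e where eL: "lin_vec L e \<noteq> 0" and eM: "lin_vec M e \<noteq> 0"
    using exists_transversal_dir[OF L M] .
  define k where "k = a * quad_coeff A A' e + b * quad_coeff B B' e"
  define ps where "ps P = a * lin_coeff A A' P e + b * lin_coeff B B' P e" for P
  define G where "G P = a * pair_poly A A' P + b * pair_poly B B' P + c" for P
  have roots: "k * s\<^sup>2 + ps P * s + G P = 0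
      \<longleftrightarrow> s = - lin L P / lin_vec L e \<or> s = - lin M P / lin_vec M e" for P s
    using zero_set_lines_along[OF zeros eL eM, of P s]
    by (simp add: pencil_member_along k_def ps_def G_def)
  have "k \<noteq> 0"
  proof
    assume "k = 0"
    with roots have "ps P \<noteq> 0" for P
      using linear_coeff_nonzero_if_root_set[OF two, of "ps P" "G P"] by simp
    moreover have "G (along (base_pt L) (dir L) s) = 0" for s
      using zeros lin_along_dir[OF L] by (auto simp: G_def line_set_def on_line_def)
    then obtain P where "ps P = 0"
      using pencil_lin_coeff_vanishes_somewhere[OF two Q ab eL] unfolding G_def ps_def by blast
    ultimately show False by blast
  qed
  moreover have "G P = k / (lin_vec L e * lin_vec M e) * pair_poly L M P" for P
    using quadratic_const_coeff_eq[OF \<open>k \<noteq> 0\<close> roots] eL eM by (simp add: pair_poly_def)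
  ultimately show ?thesis
    using that[of "k / (lin_vec L e * lin_vec M e)"] eL eM by (simp add: G_def)
qed

theorem theorem6p4:
  fixes A B A' B' l1 l2 :: "'a::field ln"
  assumes "(2::'a) \<noteq> 0"
    and "is_quad A B A' B'"
    and "is_line l1" and "is_line l2"
  shows "q_pair A B A' B' l1 l2 \<longleftrightarrow> (\<exists>f \<in> pencil A B A' B'. degeneration l1 l2 f)"
proof
  assume "q_pair A B A' B' l1 l2"
  then obtain a b c where "a \<noteq> 0 \<or> b \<noteq> 0"
    and "\<forall>p. a * pair_poly A A' p + b * pair_poly B B' p + c = pair_poly l1 l2 p"
    using q_pair_imp_factorization[OF assms] by blast
  then show "\<exists>f \<in> pencil A B A' B'. degeneration l1 l2 f"
    unfolding pencil_def degeneration_def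
    by (intro bexI[of _ "\<lambda>p. a * (lin A p * lin A' p) + b * (lin B p * lin B' p)"] exI[of _ c])
      (auto simp: pair_poly_def line_set_def on_line_def)
next
  assume "\<exists>f \<in> pencil A B A' B'. degeneration l1 l2 f"
  then obtain a b c where ab: "a \<noteq> 0 \<or> b \<noteq> 0"
    and "{p. a * pair_poly A A' p + b * pair_poly B B' p + c = 0} = line_set l1 \<union> line_set l2"
    unfolding pencil_def degeneration_def pair_poly_def by blast
  then obtain k where "k \<noteq> 0"
    and "\<forall>p. a * pair_poly A A' p + b * pair_poly B B' p + c = k * pair_poly l1 l2 p"
    using degeneration_imp_factorization[OF assms] by blast
  then show "q_pair A B A' B' l1 l2"
    using factorization_imp_q_pair[OF assms ab] by blast
qed

end
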